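(* Fix $g\ge0$ and $n\ge0$. There is a bijection from the set of ordered rooted trees $T$ with $n+1$ vertices satisfying $\max_{0\le i<n}\operatorname{dist}_T(i,i+1)\le g+1$ to the set of quadruples $(m,L,R,M)$ such that - $m$ is a non-negative integer, - $L=(L_1,\dots,L_m)$ is an $m$-tuple of ordered rooted trees of depth at most $\lfloor g/2\rfloor$, - $R=(R_1,\dots,R_m)$ is an $m$-tuple of ordered rooted trees of depth at most $\lceil g/2\rceil$, - $M$ is an ordered rooted tree of depth at most $\lceil g/2\rceil$ if $m=0$, and of depth exactly $\lceil g/2\rceil$ otherwise, and the total number of vertices of the trees in $L$, $R$ and $M$ is $n+1+m$.
   Context: An ordered rooted tree is an unlabeled rooted tree (with at least one vertex) together with a linear order on the children of each vertex. A rooted tree with vertex set $\{0,\dots,n\}$ is naturally labeled if labels increase towards the root and, for each $i$, all children of $i$ have labels smaller than all children of $i+1$. Each ordered rooted tree with $n+1$ vertices has a unique naturally labeled labeling by $\{0,\dots,n\}$ for which the children of each vertex are ordered by increasing label; vertices of $T$ are identified with these labels, and $\operatorname{dist}_T(i,j)$ is the number of edges on the path between $i$ and $j$. The depth of a rooted tree is the maximal number of edges on a path from the root to a vertex. *)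

theory Defs
  imports Main
begin

datatype otree = Node "otree list"

fun kids :: "otree \<Rightarrow> otree list" where
  "kids (Node ts) = ts"

fun nverts :: "otree \<Rightarrow> nat" where
  "nverts (Node ts) = Suc (sum_list (map nverts ts))"

fun depth :: "otree \<Rightarrow> nat" where
  "depth (Node ts) = Max (insert 0 (set (map (\<lambda>t. Suc (depth t)) ts)))"

text \<open>Vertices are addressed by paths from the root (lists of child indices).\<close>
fun subtree :: "otree \<Rightarrow> nat list \<Rightarrow> otree" where
  "subtree t [] = t"
| "subtree (Node ts) (i # p) = subtree (ts ! i) p"

text \<open>Vertices at a given level, in the order in which the natural labeling
  assigns decreasing labels: a breadth-first order in which the children of
  each vertex are listed from last to first.\<close>
fun level :: "otree \<Rightarrow> nat \<Rightarrow> nat list list" where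
  "level t 0 = [[]]"
| "level t (Suc d) = concat (map (\<lambda>p. map (\<lambda>i. p @ [i])
       (rev [0..<length (kids (subtree t p))])) (level t d))"

definition bfs :: "otree \<Rightarrow> nat list list" where
  "bfs t = concat (map (level t) [0..<Suc (depth t)])"

text \<open>The vertex with label i in the natural labeling by {0,...,n}
  (n+1 = number of vertices; the root gets label n).\<close>
definition vertex :: "otree \<Rightarrow> nat \<Rightarrow> nat list" where
  "vertex t i = bfs t ! (nverts t - 1 - i)"

fun lcp_len :: "nat list \<Rightarrow> nat list \<Rightarrow> nat" where
  "lcp_len (a # p) (b # q) = (if a = b then Suc (lcp_len p q) else 0)"
| "lcp_len _ _ = 0"

definition path_dist :: "nat list \<Rightarrow> nat list \<Rightarrow> nat" where
  "path_dist p q = length p + length q - 2 * lcp_len p q"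

definition tdist :: "otree \<Rightarrow> nat \<Rightarrow> nat \<Rightarrow> nat" where
  "tdist t i j = path_dist (vertex t i) (vertex t j)"

end

theory Submission
  imports Defs
begin

(* In the natural labelling the labels decrease along bfs, which runs through the levels in
   turn, each in the order of level. Consecutive labels therefore belong either to neighbours
   p, q of one level d, at distance 2 (d - l), or to the last vertex of level d and the first
   vertex of level d + 1, at distance 2 d + 1 - 2 l, where l = lcp_len p q is the depth of
   their lowest common ancestor. As min (lcp_len p q) (lcp_len q r) <= lcp_len p r, the bound
   for neighbours within a level extends to all pairs in it: the distance condition says that
   any two vertices of level d have a common ancestor at depth d - (g + 1) div 2, and that the
   last vertex of level d has one with the first vertex of level d + 1 at depth d - g div 2.

   Such a tree either has depth at most (g + 1) div 2, or exactly one child c of the root has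
   depth at least (g + 1) div 2; then the left siblings of c have depth below g div 2, the
   right siblings depth below (g + 1) div 2, and c again satisfies the condition. Following
   these children down a spine of m vertices, the i-th spine vertex together with its left
   (right) children forms L_i (R_i), and M is the subtree at the end of the spine. Each spine
   vertex is counted in both L_i and R_i, whence the n + 1 + m vertices. *)

lemma lcp_len_sym: "lcp_len p q = lcp_len q p"
  by (induction p q rule: lcp_len.induct) auto

lemma lcp_len_le_length: "lcp_len p q \<le> length p"
  by (induction p q rule: lcp_len.induct) auto

lemma lcp_len_self [simp]: "lcp_len p p = length p"
  by (induction p) auto

lemma min_lcp_len_le: "min (lcp_len p q) (lcp_len q r) \<le> lcp_len p r"
proof (induction p q arbitrary: r rule: lcp_len.induct)
  case (1 a p b q)
  then show ?case by (cases r) auto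
qed auto

lemma path_dist_sym: "path_dist p q = path_dist q p"
  by (simp add: path_dist_def lcp_len_sym)

lemma path_dist_le_iff_same_length:
  assumes "length p = d" "length q = d"
  shows "path_dist p q \<le> g + 1 \<longleftrightarrow> d \<le> lcp_len p q + (g + 1) div 2"
  using lcp_len_le_length[of p q] assms unfolding path_dist_def by presburger

lemma path_dist_le_iff_next_length:
  assumes "length p = d" "length q = Suc d"
  shows "path_dist p q \<le> g + 1 \<longleftrightarrow> d \<le> lcp_len p q + g div 2"
  using lcp_len_le_length[of p q] assms unfolding path_dist_def by presburger

lemma successively_map_upt:
  "successively P (map f [0..<Suc n]) \<longleftrightarrow> (\<forall>i<n. P (f i) (f (Suc i)))"
  by (auto simp: successively_conv_nth simp del: upt_Suc)

lemma successively_concat: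
  assumes "[] \<notin> set xss"
  shows "successively P (concat xss) \<longleftrightarrow>
    (\<forall>xs\<in>set xss. successively P xs) \<and> successively (\<lambda>xs ys. P (last xs) (hd ys)) xss"
  using assms
proof (induction xss)
  case (Cons xs xss)
  then show ?case by (cases xss) (auto simp: successively_append_iff)
qed simp

lemma successively_iff_pairwise:
  assumes refl: "\<And>x. x \<in> set xs \<Longrightarrow> P x x"
    and sym: "\<And>x y. x \<in> set xs \<Longrightarrow> y \<in> set xs \<Longrightarrow> P x y \<Longrightarrow> P y x"
    and trans: "\<And>x y z. x \<in> set xs \<Longrightarrow> y \<in> set xs \<Longrightarrow> z \<in> set xs \<Longrightarrow> P x y \<Longrightarrow> P y z \<Longrightarrow> P x z"
  shows "successively P xs \<longleftrightarrow> (\<forall>x\<in>set xs. \<forall>y\<in>set xs. P x y)"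
proof -
  have "successively P xs \<longleftrightarrow> sorted_wrt P xs"
    using trans by (rule successively_iff_sorted_wrt_strong)
  also have "\<dots> \<longleftrightarrow> (\<forall>x\<in>set xs. \<forall>y\<in>set xs. P x y)"
  proof
    assume sorted: "sorted_wrt P xs"
    show "\<forall>x\<in>set xs. \<forall>y\<in>set xs. P x y"
    proof (intro ballI)
      fix x y assume "x \<in> set xs" "y \<in> set xs"
      then obtain i k where ik: "i < length xs" "k < length xs" "x = xs ! i" "y = xs ! k"
        by (auto simp: in_set_conv_nth)
      show "P x y"
      proof (cases i k rule: linorder_cases)
        case less
        then show ?thesis using sorted ik by (simp add: sorted_wrt_iff_nth_less)
      next
        case equal
        then show ?thesis using refl ik by simp
      next
        case greater
        then have "P y x" using sorted ik by (simp add: sorted_wrt_iff_nth_less)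
        then show ?thesis using sym ik by simp
      qed
    qed
  qed (simp add: sorted_wrt_iff_nth_less)
  finally show ?thesis .
qed

lemma depth_Node_le_iff: "depth (Node ts) \<le> k \<longleftrightarrow> (\<forall>t\<in>set ts. depth t < k)"
  by (auto simp: Suc_le_eq)

lemma depth_less_Node: "t \<in> set ts \<Longrightarrow> depth t < depth (Node ts)"
  using depth_Node_le_iff by blast

lemma depth_Node_eq_Suc:
  assumes "ts \<noteq> []"
  obtains t where "t \<in> set ts" "depth (Node ts) = Suc (depth t)"
proof -
  define D where "D = Max (depth ` set ts)"
  have "D \<in> depth ` set ts"
    unfolding D_def using assms by (intro Max_in) auto
  then obtain t where t: "t \<in> set ts" "depth t = D"
    by blast
  have "depth (Node ts) \<le> Suc D"
    unfolding depth_Node_le_iff D_def by (simp add: le_imp_less_Suc)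
  moreover have "Suc (depth t) \<le> depth (Node ts)"
    using depth_less_Node[OF t(1)] by simp
  ultimately have "depth (Node ts) = Suc (depth t)"
    using t(2) by linarith
  with t(1) show thesis
    by (rule that)
qed

lemma depth_Node_append_Cons:
  assumes "\<forall>t\<in>set ls. depth t \<le> depth c" "\<forall>t\<in>set rs. depth t \<le> depth c"
  shows "depth (Node (ls @ c # rs)) = Suc (depth c)"
proof (rule antisym)
  show "depth (Node (ls @ c # rs)) \<le> Suc (depth c)"
    using assms by (auto simp: depth_Node_le_iff)
  show "Suc (depth c) \<le> depth (Node (ls @ c # rs))"
    using depth_less_Node[of c "ls @ c # rs"] by simp
qed

lemma Node_kids [simp]: "Node (kids t) = t"
  by (cases t) simp

lemma depth_le_iff_kids: "depth t \<le> k \<longleftrightarrow> (\<forall>s\<in>set (kids t). depth s < k)"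
  by (cases t) (simp only: kids.simps depth_Node_le_iff)

lemma nverts_kids: "nverts t = Suc (sum_list (map nverts (kids t)))"
  by (cases t) simp

lemma length_mem_level: "p \<in> set (level t d) \<Longrightarrow> length p = d"
  by (induction d arbitrary: p) auto

lemma level_Node:
  "level (Node ts) (Suc d) = concat (map (\<lambda>i. map (Cons i) (level (ts ! i) d)) (rev [0..<length ts]))"
proof (induction d)
  case (Suc d)
  have concat_map_concat: "concat (map f (concat xss)) = concat (map (\<lambda>xs. concat (map f xs)) xss)"
    for f :: "'a \<Rightarrow> 'b list" and xss
    by (induction xss) auto
  have concat_concat: "concat (concat xsss) = concat (map concat xsss)" for xsss :: "'c list list list"
    by (induction xsss) auto
  show ?case
    by (subst level.simps, subst Suc)
      (simp add: map_concat comp_def concat_map_concat concat_concat)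
qed (simp add: map_concat comp_def)

declare level.simps(2) [simp del]

lemma level_eq_Nil_iff: "level t d = [] \<longleftrightarrow> depth t < d"
proof (induction t arbitrary: d)
  case (Node ts)
  show ?case
  proof (cases d)
    case (Suc d')
    have "level (Node ts) (Suc d') = [] \<longleftrightarrow> (\<forall>i<length ts. level (ts ! i) d' = [])"
      by (auto simp: level_Node)
    also have "\<dots> \<longleftrightarrow> (\<forall>t\<in>set ts. depth t < d')"
      using Node.IH by (auto simp: all_set_conv_all_nth)
    finally show ?thesis
      using Suc by (simp add: less_Suc_eq_le Suc_le_eq)
  qed simp
qed

lemma depth_ge_if_mem_level: "p \<in> set (level t d) \<Longrightarrow> d \<le> depth t"
  using level_eq_Nil_iff[of t d] by (metis empty_iff empty_set not_le)

lemma length_level_Node: "length (level (Node ts) (Suc d)) = (\<Sum>t\<leftarrow>ts. length (level t d))"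
proof -
  have "length (level (Node ts) (Suc d)) = sum_list (rev (map (\<lambda>i. length (level (ts ! i) d)) [0..<length ts]))"
    by (simp add: level_Node length_concat comp_def rev_map)
  also have "\<dots> = (\<Sum>t\<leftarrow>map ((!) ts) [0..<length ts]. length (level t d))"
    by (simp add: comp_def)
  finally show ?thesis
    by (simp add: map_nth)
qed

lemma sum_length_level:
  "depth t < D \<Longrightarrow> (\<Sum>d<D. length (level t d)) = nverts t"
proof (induction t arbitrary: D)
  case (Node ts)
  then obtain D' where D: "D = Suc D'"
    by (cases D) auto
  have swap: "(\<Sum>d<D'. \<Sum>t\<leftarrow>us. f t d) = (\<Sum>t\<leftarrow>us. \<Sum>d<D'. f t d)"
    for us and f :: "otree \<Rightarrow> nat \<Rightarrow> nat"
    by (induction us) (simp_all add: sum.distrib)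
  have IH: "(\<Sum>d<D'. length (level t d)) = nverts t" if "t \<in> set ts" for t
    using Node.IH[OF that] Node.prems D that by (simp add: Suc_le_eq)
  have "(\<Sum>d<D. length (level (Node ts) d)) = 1 + (\<Sum>d<D'. \<Sum>t\<leftarrow>ts. length (level t d))"
    unfolding D sum.lessThan_Suc_shift by (simp add: length_level_Node)
  also have "\<dots> = 1 + (\<Sum>t\<leftarrow>ts. nverts t)"
    unfolding swap using IH by (simp cong: map_cong)
  finally show ?case
    by simp
qed

lemma length_bfs: "length (bfs t) = nverts t"
proof -
  have "length (bfs t) = (\<Sum>d\<leftarrow>[0..<Suc (depth t)]. length (level t d))"
    by (simp add: bfs_def length_concat comp_def)
  also have "\<dots> = (\<Sum>d<Suc (depth t). length (level t d))"
    by (simp add: interv_sum_list_conv_sum_set_nat atLeast0LessThan)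
  also have "\<dots> = nverts t"
    by (rule sum_length_level) simp
  finally show ?thesis .
qed

lemma map_vertex_upt: "map (vertex t) [0..<nverts t] = rev (bfs t)"
  by (rule nth_equalityI) (auto simp: vertex_def length_bfs rev_nth)

section \<open>The distance condition level by level\<close>

definition levels_close :: "nat \<Rightarrow> otree \<Rightarrow> bool" where
  "levels_close b t \<longleftrightarrow> (\<forall>d. \<forall>p\<in>set (level t d). \<forall>q\<in>set (level t d). d \<le> lcp_len p q + b)"

definition level_steps_close :: "nat \<Rightarrow> otree \<Rightarrow> bool" where
  "level_steps_close a t \<longleftrightarrow>
     (\<forall>d<depth t. d \<le> lcp_len (last (level t d)) (hd (level t (Suc d))) + a)"

lemma successively_level_iff:
  "successively (\<lambda>p q. path_dist p q \<le> g + 1) (level t d) \<longleftrightarrow>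
     (\<forall>p\<in>set (level t d). \<forall>q\<in>set (level t d). d \<le> lcp_len p q + (g + 1) div 2)"
proof -
  let ?R = "\<lambda>p q. d \<le> lcp_len p q + (g + 1) div 2"
  have "successively (\<lambda>p q. path_dist p q \<le> g + 1) (level t d) \<longleftrightarrow> successively ?R (level t d)"
  proof (rule successively_cong)
    show "path_dist p q \<le> g + 1 \<longleftrightarrow> ?R p q" if "p \<in> set (level t d)" "q \<in> set (level t d)" for p q
      using that by (intro path_dist_le_iff_same_length length_mem_level)
  qed simp
  also have "\<dots> \<longleftrightarrow> (\<forall>p\<in>set (level t d). \<forall>q\<in>set (level t d). ?R p q)"
  proof (rule successively_iff_pairwise)
    show "?R p p" if "p \<in> set (level t d)" for p
      using that by (simp add: length_mem_level)
    show "?R q p" if "?R p q" for p q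
      using that by (simp add: lcp_len_sym)
    show "?R p r" if "?R p q" "?R q r" for p q r
      using that min_lcp_len_le[of p q r] by linarith
  qed
  finally show ?thesis .
qed

lemma level_step_le_iff:
  assumes "d < depth t"
  shows "path_dist (last (level t d)) (hd (level t (Suc d))) \<le> g + 1 \<longleftrightarrow>
    d \<le> lcp_len (last (level t d)) (hd (level t (Suc d))) + g div 2"
proof (rule path_dist_le_iff_next_length)
  have "level t d \<noteq> []" "level t (Suc d) \<noteq> []"
    using assms by (simp_all add: level_eq_Nil_iff)
  then show "length (last (level t d)) = d" "length (hd (level t (Suc d))) = Suc d"
    by (meson last_in_set hd_in_set length_mem_level)+
qed

lemma successively_bfs_iff:
  "successively (\<lambda>p q. path_dist p q \<le> g + 1) (bfs t) \<longleftrightarrow>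
     levels_close ((g + 1) div 2) t \<and> level_steps_close (g div 2) t"
proof -
  let ?P = "\<lambda>p q. path_dist p q \<le> g + 1"
  let ?levels = "map (level t) [0..<Suc (depth t)]"
  have "[] \<notin> set ?levels"
    by (auto dest!: sym[of "[]"] simp: level_eq_Nil_iff)
  then have "successively ?P (bfs t) \<longleftrightarrow>
      (\<forall>xs\<in>set ?levels. successively ?P xs) \<and> successively (\<lambda>xs ys. ?P (last xs) (hd ys)) ?levels"
    unfolding bfs_def by (rule successively_concat)
  also have "\<dots> \<longleftrightarrow>
      (\<forall>d<Suc (depth t). successively ?P (level t d)) \<and>
      (\<forall>d<depth t. ?P (last (level t d)) (hd (level t (Suc d))))"
    unfolding successively_map_upt by (auto simp del: upt_Suc)
  also have "(\<forall>d<Suc (depth t). successively ?P (level t d)) \<longleftrightarrow> levels_close ((g + 1) div 2) t"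
    unfolding levels_close_def successively_level_iff
    by (metis depth_ge_if_mem_level less_Suc_eq_le)
  also have "(\<forall>d<depth t. ?P (last (level t d)) (hd (level t (Suc d)))) \<longleftrightarrow> level_steps_close (g div 2) t"
    unfolding level_steps_close_def using level_step_le_iff[of _ t g] by blast
  finally show ?thesis .
qed

lemma consecutive_tdist_le_iff:
  assumes "nverts t = Suc n"
  shows "(\<forall>i<n. tdist t i (i + 1) \<le> k) \<longleftrightarrow> successively (\<lambda>p q. path_dist p q \<le> k) (bfs t)"
proof -
  have "(\<forall>i<n. tdist t i (i + 1) \<le> k) \<longleftrightarrow>
      successively (\<lambda>p q. path_dist p q \<le> k) (map (vertex t) [0..<Suc n])"
    unfolding successively_map_upt tdist_def by simp
  also have "\<dots> \<longleftrightarrow> successively (\<lambda>p q. path_dist q p \<le> k) (bfs t)"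
    using map_vertex_upt[of t] assms by simp
  finally show ?thesis
    by (simp add: path_dist_sym)
qed

section \<open>The distance condition at the root\<close>

(* Children are listed from last to first, so X comes from the right siblings of c
   and Y from the left ones. *)
lemma level_Node_append_Cons:
  obtains X Y where
    "level (Node (ls @ c # rs)) (Suc d) = X @ map (Cons (length ls)) (level c d) @ Y"
    "X = [] \<longleftrightarrow> (\<forall>t\<in>set rs. depth t < d)"
    "Y = [] \<longleftrightarrow> (\<forall>t\<in>set ls. depth t < d)"
    "\<forall>p\<in>set X. \<exists>i q. p = i # q \<and> length ls < i"
    "\<forall>p\<in>set Y. \<exists>i q. p = i # q \<and> i < length ls"
proof -
  let ?j = "length ls"
  let ?F = "\<lambda>i. map (Cons i) (level ((ls @ c # rs) ! i) d)"
  define X where "X = concat (map ?F (rev (map ((+) (Suc ?j)) [0..<length rs])))"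
  define Y where "Y = concat (map ?F (rev [0..<?j]))"
  have "[0..<length (ls @ c # rs)] = [0..<?j] @ ?j # map ((+) (Suc ?j)) [0..<length rs]"
    by (rule nth_equalityI) (auto simp: nth_append nth_Cons')
  then have "level (Node (ls @ c # rs)) (Suc d) = X @ map (Cons ?j) (level c d) @ Y"
    by (simp add: level_Node X_def Y_def)
  moreover have "X = [] \<longleftrightarrow> (\<forall>t\<in>set rs. depth t < d)"
    by (auto simp: X_def level_eq_Nil_iff nth_append all_set_conv_all_nth)
  moreover have "Y = [] \<longleftrightarrow> (\<forall>t\<in>set ls. depth t < d)"
    by (auto simp: Y_def level_eq_Nil_iff nth_append all_set_conv_all_nth)
  moreover have "\<forall>p\<in>set X. \<exists>i q. p = i # q \<and> ?j < i"
    by (auto simp: X_def)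
  moreover have "\<forall>p\<in>set Y. \<exists>i q. p = i # q \<and> i < ?j"
    by (auto simp: Y_def)
  ultimately show thesis
    by (rule that)
qed

lemma level_Node_append_Cons_deep:
  assumes "\<forall>t\<in>set ls. depth t < d" "\<forall>t\<in>set rs. depth t < d"
  shows "level (Node (ls @ c # rs)) (Suc d) = map (Cons (length ls)) (level c d)"
  using assms by (cases rule: level_Node_append_Cons[of ls c rs d]) auto

lemma hd_level_Node_append_Cons:
  assumes "\<forall>t\<in>set rs. depth t < d" "d \<le> depth c"
  shows "hd (level (Node (ls @ c # rs)) (Suc d)) = length ls # hd (level c d)"
proof (cases rule: level_Node_append_Cons[of ls c rs d])
  case (1 X Y)
  moreover have "level c d \<noteq> []"
    using assms(2) by (simp add: level_eq_Nil_iff)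
  ultimately show ?thesis
    using assms(1) by (simp add: hd_map)
qed

lemma last_level_Node_append_Cons:
  assumes "\<forall>t\<in>set ls. depth t < d" "d \<le> depth c"
  shows "last (level (Node (ls @ c # rs)) (Suc d)) = length ls # last (level c d)"
proof (cases rule: level_Node_append_Cons[of ls c rs d])
  case (1 X Y)
  moreover have "level c d \<noteq> []"
    using assms(2) by (simp add: level_eq_Nil_iff)
  ultimately show ?thesis
    using assms(1) by (simp add: last_map)
qed

lemma last_level_Node_append_Cons_in_left:
  assumes "t \<in> set ls" "d \<le> depth t"
  obtains i p where "last (level (Node (ls @ c # rs)) (Suc d)) = i # p" "i < length ls"
proof (cases rule: level_Node_append_Cons[of ls c rs d])
  case (1 X Y)
  then have "Y \<noteq> []"
    using assms by auto
  then have "last (level (Node (ls @ c # rs)) (Suc d)) = last Y" "last Y \<in> set Y"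
    using 1 by simp_all
  with 1 show thesis
    using that by metis
qed

lemma levels_close_if_depth_le: "depth t \<le> b \<Longrightarrow> levels_close b t"
  unfolding levels_close_def using depth_ge_if_mem_level by (meson le_add2 le_trans)

lemma level_steps_close_if_depth_le: "depth t \<le> Suc a \<Longrightarrow> level_steps_close a t"
  unfolding level_steps_close_def by auto

lemma levels_close_iff_deep:
  "levels_close b t \<longleftrightarrow>
     (\<forall>d\<ge>b. \<forall>p\<in>set (level t (Suc d)). \<forall>q\<in>set (level t (Suc d)). Suc d \<le> lcp_len p q + b)"
proof
  assume deep: "\<forall>d\<ge>b. \<forall>p\<in>set (level t (Suc d)). \<forall>q\<in>set (level t (Suc d)). Suc d \<le> lcp_len p q + b"
  show "levels_close b t"
    unfolding levels_close_def
  proof (intro allI ballI)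
    fix d p q assume pq: "p \<in> set (level t d)" "q \<in> set (level t d)"
    show "d \<le> lcp_len p q + b"
    proof (cases "d \<le> b")
      case False
      then obtain d' where "d = Suc d'" "b \<le> d'"
        by (cases d) auto
      then show ?thesis
        using deep pq by blast
    qed simp
  qed
qed (auto simp: levels_close_def)

lemma levels_close_Node_append_Cons_iff:
  assumes "\<forall>t\<in>set ls. depth t < b" "\<forall>t\<in>set rs. depth t < b"
  shows "levels_close b (Node (ls @ c # rs)) \<longleftrightarrow> levels_close b c"
proof -
  have "level (Node (ls @ c # rs)) (Suc d) = map (Cons (length ls)) (level c d)" if "b \<le> d" for d
    using assms that by (intro level_Node_append_Cons_deep) auto
  then have "levels_close b (Node (ls @ c # rs)) \<longleftrightarrow>
      (\<forall>d\<ge>b. \<forall>p\<in>set (level c d). \<forall>q\<in>set (level c d). d \<le> lcp_len p q + b)"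
    unfolding levels_close_iff_deep[of b "Node _"] by simp
  also have "\<dots> \<longleftrightarrow> levels_close b c"
    unfolding levels_close_def by (meson nat_le_linear trans_le_add2)
  finally show ?thesis .
qed

lemma levels_close_Node_append_Cons_siblings:
  assumes "levels_close b (Node (ls @ c # rs))" "b \<le> depth c"
  shows "\<forall>t\<in>set ls. depth t < b" "\<forall>t\<in>set rs. depth t < b"
proof -
  obtain X Y where lev: "level (Node (ls @ c # rs)) (Suc b) = X @ map (Cons (length ls)) (level c b) @ Y"
    and X: "X = [] \<longleftrightarrow> (\<forall>t\<in>set rs. depth t < b)" and Y: "Y = [] \<longleftrightarrow> (\<forall>t\<in>set ls. depth t < b)"
    and hd_X: "\<forall>p\<in>set X. \<exists>i q. p = i # q \<and> length ls < i"
    and hd_Y: "\<forall>p\<in>set Y. \<exists>i q. p = i # q \<and> i < length ls"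
    by (rule level_Node_append_Cons)
  obtain p where p: "p \<in> set (level c b)"
    using assms(2) by (metis level_eq_Nil_iff list.set_sel(1) not_le)
  have "X = [] \<and> Y = []"
  proof (rule ccontr)
    assume "\<not> (X = [] \<and> Y = [])"
    then obtain q where q: "q \<in> set X \<union> set Y"
      by (metis Un_iff list.set_sel(1))
    with hd_X hd_Y obtain i q' where "q = i # q'" "i \<noteq> length ls"
      by fastforce
    moreover have "q \<in> set (level (Node (ls @ c # rs)) (Suc b))"
      "length ls # p \<in> set (level (Node (ls @ c # rs)) (Suc b))"
      using p q unfolding lev by auto
    then have "Suc b \<le> lcp_len q (length ls # p) + b"
      using assms(1) unfolding levels_close_def by blast
    ultimately show False
      by simp
  qed
  then show "\<forall>t\<in>set ls. depth t < b" "\<forall>t\<in>set rs. depth t < b"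
    using X Y by simp_all
qed

lemma lcp_level_step_Node_append_Cons:
  assumes "d < depth c" "\<forall>t\<in>set rs. depth t \<le> d"
  shows "lcp_len (last (level (Node (ls @ c # rs)) (Suc d))) (hd (level (Node (ls @ c # rs)) (Suc (Suc d)))) =
    (if \<forall>t\<in>set ls. depth t < d then Suc (lcp_len (last (level c d)) (hd (level c (Suc d)))) else 0)"
proof -
  have hd: "hd (level (Node (ls @ c # rs)) (Suc (Suc d))) = length ls # hd (level c (Suc d))"
    using assms by (intro hd_level_Node_append_Cons) auto
  show ?thesis
  proof (cases "\<forall>t\<in>set ls. depth t < d")
    case True
    then show ?thesis
      using last_level_Node_append_Cons[OF True] assms(1) hd by simp
  next
    case False
    then obtain t where "t \<in> set ls" "d \<le> depth t"
      by auto
    then obtain i p where "last (level (Node (ls @ c # rs)) (Suc d)) = i # p" "i < length ls"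
      by (rule last_level_Node_append_Cons_in_left)
    then show ?thesis
      using False hd by simp
  qed
qed

lemma level_steps_close_Node_append_Cons_iff:
  assumes "a \<le> b" "b \<le> Suc a" "b \<le> depth c"
    and "\<forall>t\<in>set ls. depth t < b" "\<forall>t\<in>set rs. depth t < b"
  shows "level_steps_close a (Node (ls @ c # rs)) \<longleftrightarrow>
    level_steps_close a c \<and> (\<forall>t\<in>set ls. depth t < a)"
proof -
  let ?T = "Node (ls @ c # rs)"
  let ?step = "\<lambda>t d. d \<le> lcp_len (last (level t d)) (hd (level t (Suc d))) + a"
  have depth_T: "depth ?T = Suc (depth c)"
    using assms(3-5) by (intro depth_Node_append_Cons) auto
  have "level_steps_close a ?T \<longleftrightarrow> (\<forall>d<depth c. a \<le> d \<longrightarrow> ?step ?T (Suc d))"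
    unfolding level_steps_close_def depth_T All_less_Suc2 by (auto simp: not_le)
  also have "\<dots> \<longleftrightarrow> (\<forall>d<depth c. a \<le> d \<longrightarrow> (\<forall>t\<in>set ls. depth t < d) \<and> ?step c d)"
  proof -
    have "?step ?T (Suc d) \<longleftrightarrow> (\<forall>t\<in>set ls. depth t < d) \<and> ?step c d" if "d < depth c" "a \<le> d" for d
    proof -
      have "\<forall>t\<in>set rs. depth t \<le> d"
        using assms(2,5) that(2) by fastforce
      then show ?thesis
        using lcp_level_step_Node_append_Cons[OF that(1)] that(2) by auto
    qed
    then show ?thesis
      by auto
  qed
  also have "\<dots> \<longleftrightarrow> level_steps_close a c \<and> (\<forall>t\<in>set ls. depth t < a)"
  proof -
    have "(\<forall>d<depth c. a \<le> d \<longrightarrow> (\<forall>t\<in>set ls. depth t < d)) \<longleftrightarrow> (\<forall>t\<in>set ls. depth t < a)"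
      using assms(1,3,4) by (cases "a < depth c") (fastforce intro: order.strict_trans2, auto)
    moreover have "(\<forall>d<depth c. a \<le> d \<longrightarrow> ?step c d) \<longleftrightarrow> level_steps_close a c"
      unfolding level_steps_close_def by (meson nat_le_linear trans_le_add2)
    ultimately show ?thesis
      by blast
  qed
  finally show ?thesis .
qed

section \<open>Spines\<close>

fun spine :: "otree list \<Rightarrow> otree list \<Rightarrow> otree \<Rightarrow> otree" where
  "spine (L # Ls) (R # Rs) M = Node (kids L @ spine Ls Rs M # kids R)"
| "spine _ _ M = M"

definition valid_spine :: "nat \<Rightarrow> nat \<Rightarrow> otree list \<Rightarrow> otree list \<Rightarrow> otree \<Rightarrow> bool" where
  "valid_spine a b Ls Rs M \<longleftrightarrow> length Ls = length Rs \<and>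
     (\<forall>t\<in>set Ls. depth t \<le> a) \<and> (\<forall>t\<in>set Rs. depth t \<le> b) \<and>
     (if Ls = [] then depth M \<le> b else depth M = b)"

lemma valid_spine_Cons:
  "valid_spine a b (L # Ls) (R # Rs) M \<longleftrightarrow>
     depth L \<le> a \<and> depth R \<le> b \<and> depth M = b \<and> valid_spine a b Ls Rs M"
  by (auto simp: valid_spine_def)

lemma depth_spine:
  assumes "a \<le> b" "valid_spine a b Ls Rs M" "b \<le> depth M"
  shows "depth (spine Ls Rs M) = depth M + length Ls"
  using assms(2)
proof (induction Ls arbitrary: Rs)
  case Nil
  then show ?case
    by (cases Rs) simp_all
next
  case (Cons L Ls)
  then obtain R Rs' where Rs: "Rs = R # Rs'"
    by (cases Rs) (auto simp: valid_spine_def)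
  let ?c = "spine Ls Rs' M"
  have L: "depth L \<le> a" and R: "depth R \<le> b" and M: "depth M = b" and c: "depth ?c = depth M + length Ls"
    using Cons Rs by (simp_all add: valid_spine_Cons)
  have "\<forall>t\<in>set (kids L). depth t \<le> depth ?c" "\<forall>t\<in>set (kids R). depth t \<le> depth ?c"
    using L R M c assms(1) depth_le_iff_kids[of L a] depth_le_iff_kids[of R b] by fastforce+
  then have "depth (Node (kids L @ ?c # kids R)) = Suc (depth ?c)"
    by (rule depth_Node_append_Cons)
  then show ?case
    using c Rs by simp
qed

lemma nverts_spine:
  assumes "length Ls = length Rs"
  shows "nverts (spine Ls Rs M) + length Ls = sum_list (map nverts Ls) + sum_list (map nverts Rs) + nverts M"
  using assms
proof (induction Ls arbitrary: Rs)
  case (Cons L Ls)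
  then obtain R Rs' where "Rs = R # Rs'"
    by (cases Rs) auto
  with Cons show ?case
    using nverts_kids[of L] nverts_kids[of R] by simp
qed simp

lemma valid_spine_Nil_iff_depth_le:
  assumes "a \<le> b" "valid_spine a b Ls Rs M"
  shows "Ls = [] \<longleftrightarrow> depth (spine Ls Rs M) \<le> b"
proof (cases Ls)
  case Nil
  with assms(2) show ?thesis
    by (cases Rs) (auto simp: valid_spine_def)
next
  case (Cons L Ls')
  with assms have "depth (spine Ls Rs M) = b + length Ls"
    using depth_spine[OF assms] by (simp add: valid_spine_def)
  with Cons show ?thesis
    by simp
qed

lemma split_list_first_prop_unique:
  assumes "xs @ x # ys = xs' @ x' # ys'" "P x" "P x'" "\<forall>t\<in>set xs. \<not> P t" "\<forall>t\<in>set xs'. \<not> P t"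
  shows "xs = xs' \<and> x = x' \<and> ys = ys'"
  using assms
proof (induction xs arbitrary: xs')
  case Nil
  then show ?case by (cases xs') auto
next
  case (Cons z xs)
  then show ?case by (cases xs') auto
qed

lemma spine_inj:
  assumes "a \<le> b" "valid_spine a b Ls Rs M" "valid_spine a b Ls' Rs' M'"
    and "spine Ls Rs M = spine Ls' Rs' M'"
  shows "Ls = Ls' \<and> Rs = Rs' \<and> M = M'"
  using assms(2-4)
proof (induction Ls arbitrary: Rs Ls' Rs')
  case Nil
  then have "Ls' = []"
    using valid_spine_Nil_iff_depth_le[OF assms(1)] by metis
  with Nil show ?case
    by (cases Rs; cases Rs') (auto simp: valid_spine_def)
next
  case (Cons L Ls)
  then have "Ls' \<noteq> []"
    using valid_spine_Nil_iff_depth_le[OF assms(1)] by (metis list.distinct(1))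
  then obtain L' Ls'' where Ls': "Ls' = L' # Ls''"
    by (cases Ls') auto
  obtain R Rs0 where Rs: "Rs = R # Rs0"
    using Cons.prems(1) by (cases Rs) (auto simp: valid_spine_def)
  obtain R' Rs1 where Rs': "Rs' = R' # Rs1"
    using Cons.prems(2) Ls' by (cases Rs') (auto simp: valid_spine_def)
  have valid: "valid_spine a b Ls Rs0 M" "valid_spine a b Ls'' Rs1 M'"
    and "depth L \<le> a" "depth L' \<le> a" "depth M = b" "depth M' = b"
    using Cons.prems(1,2) Rs Rs' Ls' by (simp_all add: valid_spine_Cons)
  then have deep: "b \<le> depth (spine Ls Rs0 M)" "b \<le> depth (spine Ls'' Rs1 M')"
    and shallow: "\<forall>t\<in>set (kids L). \<not> b \<le> depth t" "\<forall>t\<in>set (kids L'). \<not> b \<le> depth t"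
    using assms(1) depth_spine[OF assms(1) valid(1)] depth_spine[OF assms(1) valid(2)]
      depth_le_iff_kids[of L a] depth_le_iff_kids[of L' a] by auto
  have "kids L @ spine Ls Rs0 M # kids R = kids L' @ spine Ls'' Rs1 M' # kids R'"
    using Cons.prems(3) Rs Rs' Ls' by simp
  then have "kids L = kids L'" "spine Ls Rs0 M = spine Ls'' Rs1 M'" "kids R = kids R'"
    using split_list_first_prop_unique[where P = "\<lambda>t. b \<le> depth t"] deep shallow by blast+
  then show ?case
    using Cons.IH[OF valid] Rs Rs' Ls' Node_kids by metis
qed

lemma close_spine:
  assumes "a \<le> b" "b \<le> Suc a" "valid_spine a b Ls Rs M"
  shows "levels_close b (spine Ls Rs M) \<and> level_steps_close a (spine Ls Rs M)"
  using assms(3)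
proof (induction Ls arbitrary: Rs)
  case Nil
  then have "depth (spine [] Rs M) \<le> b"
    by (cases Rs) (simp_all add: valid_spine_def)
  then show ?case
    using assms(2) levels_close_if_depth_le level_steps_close_if_depth_le by auto
next
  case (Cons L Ls)
  then obtain R Rs' where Rs: "Rs = R # Rs'"
    by (cases Rs) (auto simp: valid_spine_def)
  let ?c = "spine Ls Rs' M"
  have L: "depth L \<le> a" and R: "depth R \<le> b" and valid: "valid_spine a b Ls Rs' M" and M: "depth M = b"
    using Cons.prems Rs by (simp_all add: valid_spine_Cons)
  have deep: "b \<le> depth ?c"
    using depth_spine[OF assms(1) valid] M by simp
  have left: "\<forall>t\<in>set (kids L). depth t < a" and right: "\<forall>t\<in>set (kids R). depth t < b"
    using L R depth_le_iff_kids by blast+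
  then have "\<forall>t\<in>set (kids L). depth t < b"
    using assms(1) by fastforce
  then have "levels_close b (Node (kids L @ ?c # kids R)) \<longleftrightarrow> levels_close b ?c"
    and "level_steps_close a (Node (kids L @ ?c # kids R)) \<longleftrightarrow> level_steps_close a ?c"
    using assms(1,2) deep left right
    by (simp_all add: levels_close_Node_append_Cons_iff level_steps_close_Node_append_Cons_iff)
  then show ?case
    using Cons.IH[OF valid] Rs by simp
qed

lemma spine_if_close:
  assumes "a \<le> b" "b \<le> Suc a" "levels_close b T" "level_steps_close a T"
  shows "\<exists>Ls Rs M. valid_spine a b Ls Rs M \<and> spine Ls Rs M = T"
  using assms(3,4)
proof (induction T)
  case (Node ts)
  show ?case
  proof (cases "depth (Node ts) \<le> b")
    case True
    then have "valid_spine a b [] [] (Node ts)"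
      by (simp add: valid_spine_def)
    then show ?thesis
      by fastforce
  next
    case False
    then have "ts \<noteq> []"
      by auto
    then obtain c where c: "c \<in> set ts" "depth (Node ts) = Suc (depth c)"
      by (rule depth_Node_eq_Suc)
    then have deep: "b \<le> depth c"
      using False by simp
    obtain ls rs where ts: "ts = ls @ c # rs"
      using split_list[OF c(1)] by blast
    have siblings: "\<forall>t\<in>set ls. depth t < b" "\<forall>t\<in>set rs. depth t < b"
      using levels_close_Node_append_Cons_siblings[OF _ deep] Node.prems(1) ts by blast+
    then have "levels_close b c" "level_steps_close a c" and left: "\<forall>t\<in>set ls. depth t < a"
      using Node.prems ts assms(1,2) deep
      by (simp_all add: levels_close_Node_append_Cons_iff level_steps_close_Node_append_Cons_iff)
    then obtain Ls Rs M where valid: "valid_spine a b Ls Rs M" and c_spine: "spine Ls Rs M = c"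
      using Node.IH[OF c(1)] by blast
    have "depth M = b"
      using valid_spine_Nil_iff_depth_le[OF assms(1) valid] valid deep c_spine
      by (auto simp: valid_spine_def split: if_splits)
    then have "valid_spine a b (Node ls # Ls) (Node rs # Rs) M"
      using valid left siblings(2) by (auto simp: valid_spine_Cons Suc_le_eq)
    moreover have "spine (Node ls # Ls) (Node rs # Rs) M = Node ts"
      using c_spine ts by simp
    ultimately show ?thesis
      by blast
  qed
qed

lemma bij_betw_spine:
  assumes "a \<le> b" "b \<le> Suc a"
  shows "bij_betw (\<lambda>(m, Ls, Rs, M). spine Ls Rs M)
    {(m, Ls, Rs, M). m = length Ls \<and> valid_spine a b Ls Rs M \<and>
       sum_list (map nverts Ls) + sum_list (map nverts Rs) + nverts M = N + m}
    {T. nverts T = N \<and> levels_close b T \<and> level_steps_close a T}"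
  (is "bij_betw ?f ?Q ?T")
proof (rule bij_betwI')
  fix x y assume "x \<in> ?Q" "y \<in> ?Q"
  then show "?f x = ?f y \<longleftrightarrow> x = y"
    by (auto dest: spine_inj[OF assms(1)])
next
  fix x assume "x \<in> ?Q"
  then obtain Ls Rs M where x: "x = (length Ls, Ls, Rs, M)" and valid: "valid_spine a b Ls Rs M"
    and size: "sum_list (map nverts Ls) + sum_list (map nverts Rs) + nverts M = N + length Ls"
    by auto
  have "nverts (spine Ls Rs M) = N"
    using nverts_spine[of Ls Rs M] valid size by (simp add: valid_spine_def)
  then show "?f x \<in> ?T"
    using close_spine[OF assms valid] x by simp
next
  fix T assume T: "T \<in> ?T"
  then obtain Ls Rs M where valid: "valid_spine a b Ls Rs M" and T_eq: "spine Ls Rs M = T"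
    using spine_if_close[OF assms] by blast
  have "(length Ls, Ls, Rs, M) \<in> ?Q"
    using T T_eq valid nverts_spine[of Ls Rs M] by (auto simp: valid_spine_def)
  then show "\<exists>x\<in>?Q. T = ?f x"
    using T_eq by (intro bexI[of _ "(length Ls, Ls, Rs, M)"]) simp_all
qed

theorem lemma3p10:
  fixes g n :: nat
  shows "\<exists>f. bij_betw f
     {T. nverts T = n + 1 \<and> (\<forall>i<n. tdist T i (i + 1) \<le> g + 1)}
     {(m, L, R, M). length L = m \<and> length R = m
        \<and> (\<forall>t\<in>set L. depth t \<le> g div 2)
        \<and> (\<forall>t\<in>set R. depth t \<le> (g + 1) div 2)
        \<and> (if m = 0 then depth M \<le> (g + 1) div 2 else depth M = (g + 1) div 2)
        \<and> sum_list (map nverts L) + sum_list (map nverts R) + nverts M = n + 1 + m}"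
    (is "\<exists>f. bij_betw f ?Trees ?Quads")
proof -
  let ?a = "g div 2" and ?b = "(g + 1) div 2"
  have ab: "?a \<le> ?b" "?b \<le> Suc ?a"
    by simp_all
  have trees: "?Trees = {T. nverts T = n + 1 \<and> levels_close ?b T \<and> level_steps_close ?a T}"
  proof (intro Collect_cong conj_cong refl)
    fix T assume "nverts T = n + 1"
    then show "(\<forall>i<n. tdist T i (i + 1) \<le> g + 1) \<longleftrightarrow> levels_close ?b T \<and> level_steps_close ?a T"
      using consecutive_tdist_le_iff[of T n "g + 1"] successively_bfs_iff[of g T] by simp
  qed
  have quads: "?Quads = {(m, Ls, Rs, M). m = length Ls \<and> valid_spine ?a ?b Ls Rs M \<and>
       sum_list (map nverts Ls) + sum_list (map nverts Rs) + nverts M = n + 1 + m}"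
    by (auto simp: valid_spine_def)
  show ?thesis
    unfolding trees quads by (rule exI, rule bij_betw_inv_into, rule bij_betw_spine[OF ab])
qed

end
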